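(* Let $(G,\sigma)$ be a connection graph with vertex set $V$, and let $H\subsetneq V$ be a nonempty proper subset. Suppose $f:V\to\mathbb{R}^{d\times d}$ is harmonic on $H$, i.e. $(\mathcal{L}f)(i)=\sum_{j\sim i}w_{ij}(f(i)-\sigma_{ij}f(j))=0_{d\times d}$ for every $i\in H$. Let $\|\cdot\|$ be any orthogonally invariant matrix norm on $\mathbb{R}^{d\times d}$. Then $$\max_{i\in\overline{H}}\|f(i)\|=\max_{i\in\partial H}\|f(i)\|.$$
   Context: A connection graph $(G,\sigma)$ consists of a finite connected weighted graph $G=(V,E,W)$ (weights $w_{ij}>0$ iff $\{i,j\}\in E$, no loops or multiple edges) and a map $\sigma$ from oriented edges to $\mathsf{O}(d)$ with $\sigma_{ji}=\sigma_{ij}^{\mathrm T}$. The vertex boundary is $\partial H=\{j\in V\setminus H:\ j\sim i\text{ for some }i\in H\}$ and $\overline{H}=H\cup\partial H$. *)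

theory Defs
  imports "HOL-Analysis.Analysis"
begin

definition adj :: "('v \<Rightarrow> 'v \<Rightarrow> real) \<Rightarrow> 'v \<Rightarrow> 'v \<Rightarrow> bool" where
  "adj w i j \<longleftrightarrow> w i j > 0"

definition connection_graph ::
  "'v set \<Rightarrow> ('v \<Rightarrow> 'v \<Rightarrow> real) \<Rightarrow> ('v \<Rightarrow> 'v \<Rightarrow> real^'d^'d) \<Rightarrow> bool" where
  "connection_graph V w \<sigma> \<longleftrightarrow>
     finite V \<and> V \<noteq> {} \<and>
     (\<forall>i\<in>V. \<forall>j\<in>V. w i j \<ge> 0 \<and> w i j = w j i) \<and>
     (\<forall>i\<in>V. w i i = 0) \<and>
     (\<forall>i\<in>V. \<forall>j\<in>V. adj w i j \<longrightarrow>
         orthogonal_matrix (\<sigma> i j) \<and> \<sigma> j i = transpose (\<sigma> i j)) \<and>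
     (\<forall>i\<in>V. \<forall>j\<in>V. (i, j) \<in> {(a, b). a \<in> V \<and> b \<in> V \<and> adj w a b}\<^sup>*)"

definition vertex_boundary :: "'v set \<Rightarrow> ('v \<Rightarrow> 'v \<Rightarrow> real) \<Rightarrow> 'v set \<Rightarrow> 'v set" where
  "vertex_boundary V w H = {j \<in> V - H. \<exists>i\<in>H. adj w j i}"

definition conn_laplacian ::
  "'v set \<Rightarrow> ('v \<Rightarrow> 'v \<Rightarrow> real) \<Rightarrow> ('v \<Rightarrow> 'v \<Rightarrow> real^'d^'d) \<Rightarrow> ('v \<Rightarrow> real^'d^'d) \<Rightarrow> 'v \<Rightarrow> real^'d^'d" where
  "conn_laplacian V w \<sigma> f i = (\<Sum>j\<in>{j\<in>V. adj w i j}. w i j *\<^sub>R (f i - \<sigma> i j ** f j))"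

definition orth_inv_matrix_norm :: "(real^'d^'d \<Rightarrow> real) \<Rightarrow> bool" where
  "orth_inv_matrix_norm N \<longleftrightarrow>
     (\<forall>A. N A \<ge> 0) \<and> (\<forall>A. N A = 0 \<longleftrightarrow> A = 0) \<and>
     (\<forall>c A. N (c *\<^sub>R A) = \<bar>c\<bar> * N A) \<and>
     (\<forall>A B. N (A + B) \<le> N A + N B) \<and>
     (\<forall>U W A. orthogonal_matrix U \<longrightarrow> orthogonal_matrix W \<longrightarrow> N (U ** A ** W) = N A)"

end

theory Submission
  imports Defs
begin

text \<open>Taking norms in the harmonicity equation \<open>(\<Sum>j\<sim>i. w i j) f i = \<Sum>j\<sim>i. w i j \<sigma> i j f j\<close>
  and using the triangle inequality together with \<open>N (\<sigma> i j ** f j) = N (f j)\<close> shows that the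
  real function \<open>g = N \<circ> f\<close> satisfies the sub-mean-value inequality at every vertex of \<open>H\<close>.
  The classical maximum principle for such functions then applies: if the maximum \<open>M\<close> of \<open>g\<close> on
  \<open>H \<union> \<partial>H\<close> were not attained on \<open>\<partial>H\<close>, the set of vertices of \<open>H\<close> where \<open>g = M\<close> would be
  nonempty and closed under adjacency, hence all of \<open>V\<close> by connectedness, contradicting \<open>H \<noteq> V\<close>.\<close>

abbreviation neighbours :: "'v set \<Rightarrow> ('v \<Rightarrow> 'v \<Rightarrow> real) \<Rightarrow> 'v \<Rightarrow> 'v set" where
  "neighbours V w i \<equiv> {j\<in>V. adj w i j}"

lemma orth_inv_matrix_norm_sum_le:
  assumes "orth_inv_matrix_norm N" "finite A"
  shows "N (\<Sum>j\<in>A. F j) \<le> (\<Sum>j\<in>A. N (F j))"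
  using assms(2)
proof (induction A rule: finite_induct)
  case empty
  have "N 0 = 0" using assms(1) unfolding orth_inv_matrix_norm_def by blast
  then show ?case by simp
next
  case (insert x A)
  have "N (F x + sum F A) \<le> N (F x) + N (sum F A)"
    using assms(1) unfolding orth_inv_matrix_norm_def by blast
  then show ?case using insert by simp
qed

lemma orth_inv_matrix_norm_orthogonal_left:
  assumes "orth_inv_matrix_norm N" "orthogonal_matrix U"
  shows "N (U ** A) = N A"
proof -
  have "N (U ** A ** mat 1) = N A"
    using assms orthogonal_matrix_id unfolding orth_inv_matrix_norm_def by blast
  then show ?thesis by (simp add: matrix_mul_rid)
qed

lemma harmonic_norm_submean:
  fixes \<sigma> :: "'v \<Rightarrow> 'v \<Rightarrow> real^'d^'d"
  assumes cg: "connection_graph V w \<sigma>" and "i \<in> V"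
    and harmonic: "conn_laplacian V w \<sigma> f i = 0"
    and N: "orth_inv_matrix_norm N"
  shows "(\<Sum>j\<in>neighbours V w i. w i j) * N (f i) \<le> (\<Sum>j\<in>neighbours V w i. w i j * N (f j))"
proof -
  let ?A = "neighbours V w i"
  have fin: "finite ?A" using cg unfolding connection_graph_def by auto
  have "(\<Sum>j\<in>?A. w i j *\<^sub>R f i) - (\<Sum>j\<in>?A. w i j *\<^sub>R (\<sigma> i j ** f j)) = 0"
    using harmonic unfolding conn_laplacian_def by (simp add: scaleR_diff_right sum_subtractf)
  then have mean: "(\<Sum>j\<in>?A. w i j) *\<^sub>R f i = (\<Sum>j\<in>?A. w i j *\<^sub>R (\<sigma> i j ** f j))"
    by (simp add: scaleR_sum_left)
  have "(\<Sum>j\<in>?A. w i j) \<ge> 0" by (rule sum_nonneg) (auto simp: adj_def)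
  then have "(\<Sum>j\<in>?A. w i j) * N (f i) = N ((\<Sum>j\<in>?A. w i j) *\<^sub>R f i)"
    using N unfolding orth_inv_matrix_norm_def by simp
  also have "\<dots> = N (\<Sum>j\<in>?A. w i j *\<^sub>R (\<sigma> i j ** f j))" using mean by simp
  also have "\<dots> \<le> (\<Sum>j\<in>?A. N (w i j *\<^sub>R (\<sigma> i j ** f j)))"
    by (rule orth_inv_matrix_norm_sum_le[OF N fin])
  also have "\<dots> = (\<Sum>j\<in>?A. w i j * N (f j))"
  proof (rule sum.cong)
    fix j assume j: "j \<in> ?A"
    then have "orthogonal_matrix (\<sigma> i j)" using cg \<open>i \<in> V\<close> unfolding connection_graph_def by auto
    then have "N (\<sigma> i j ** f j) = N (f j)" by (rule orth_inv_matrix_norm_orthogonal_left[OF N])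
    moreover have "w i j > 0" using j by (simp add: adj_def)
    ultimately show "N (w i j *\<^sub>R (\<sigma> i j ** f j)) = w i j * N (f j)"
      using N unfolding orth_inv_matrix_norm_def by simp
  qed simp
  finally show ?thesis .
qed

lemma weighted_mean_ge_upper_bound_imp_eq:
  fixes w g :: "'a \<Rightarrow> real"
  assumes "finite A" and pos: "\<forall>k\<in>A. w k > 0" and bound: "\<forall>k\<in>A. g k \<le> M"
    and mean: "(\<Sum>k\<in>A. w k) * M \<le> (\<Sum>k\<in>A. w k * g k)" and "k \<in> A"
  shows "g k = M"
proof -
  have nonneg: "\<forall>k\<in>A. 0 \<le> w k * (M - g k)" using pos bound by (simp add: less_imp_le)
  have "(\<Sum>k\<in>A. w k * (M - g k)) = (\<Sum>k\<in>A. w k) * M - (\<Sum>k\<in>A. w k * g k)"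
    by (simp add: algebra_simps sum_subtractf sum_distrib_left)
  moreover have "(\<Sum>k\<in>A. w k * (M - g k)) \<ge> 0" using nonneg by (simp add: sum_nonneg)
  ultimately have "(\<Sum>k\<in>A. w k * (M - g k)) = 0" using mean by linarith
  then have "w k * (M - g k) = 0"
    using sum_nonneg_eq_0_iff[OF \<open>finite A\<close>, of "\<lambda>k. w k * (M - g k)"] nonneg \<open>k \<in> A\<close>
    by simp
  then show ?thesis using pos \<open>k \<in> A\<close> by fastforce
qed

lemma adj_closed_subset_eq:
  assumes connected: "\<forall>i\<in>V. \<forall>j\<in>V. (i, j) \<in> {(a, b). a \<in> V \<and> b \<in> V \<and> adj w a b}\<^sup>*"
    and "S \<subseteq> V" "x \<in> S" and closed: "\<forall>i\<in>S. \<forall>j\<in>V. adj w i j \<longrightarrow> j \<in> S"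
  shows "S = V"
proof
  show "V \<subseteq> S"
  proof
    fix v assume "v \<in> V"
    with connected \<open>S \<subseteq> V\<close> \<open>x \<in> S\<close>
    have "(x, v) \<in> {(a, b). a \<in> V \<and> b \<in> V \<and> adj w a b}\<^sup>*" by blast
    then show "v \<in> S"
      by (induction rule: rtrancl_induct) (use \<open>x \<in> S\<close> closed in auto)
  qed
qed fact

lemma adj_in_vertex_closure:
  assumes "\<forall>i\<in>V. \<forall>j\<in>V. w i j = w j i" "H \<subseteq> V" "i \<in> H" "j \<in> V" "adj w i j"
  shows "j \<in> H \<union> vertex_boundary V w H"
proof -
  have "adj w j i" using assms unfolding adj_def by (metis subsetD)
  then show ?thesis using assms unfolding vertex_boundary_def by auto
qed

lemma submean_attains_Max_on_vertex_boundary: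
  fixes g :: "'v \<Rightarrow> real"
  assumes "finite V" and sym: "\<forall>i\<in>V. \<forall>j\<in>V. w i j = w j i"
    and connected: "\<forall>i\<in>V. \<forall>j\<in>V. (i, j) \<in> {(a, b). a \<in> V \<and> b \<in> V \<and> adj w a b}\<^sup>*"
    and "H \<subseteq> V" "H \<noteq> {}" "H \<noteq> V"
    and submean: "\<forall>i\<in>H. (\<Sum>j\<in>neighbours V w i. w i j) * g i \<le> (\<Sum>j\<in>neighbours V w i. w i j * g j)"
  shows "\<exists>b\<in>vertex_boundary V w H. g b = Max (g ` (H \<union> vertex_boundary V w H))"
proof (rule ccontr)
  let ?B = "vertex_boundary V w H"
  define M where "M = Max (g ` (H \<union> ?B))"
  assume not_on_boundary: "\<not> (\<exists>b\<in>?B. g b = M)"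
  have fin: "finite (H \<union> ?B)"
    using \<open>finite V\<close> \<open>H \<subseteq> V\<close> unfolding vertex_boundary_def by (simp add: finite_subset)
  then have le_M: "g k \<le> M" if "k \<in> H \<union> ?B" for k
    unfolding M_def using that by simp
  have "M \<in> g ` (H \<union> ?B)" unfolding M_def using fin \<open>H \<noteq> {}\<close> by (intro Max_in) auto
  then obtain x where x: "x \<in> H \<union> ?B" "g x = M" by auto
  define S where "S = {i\<in>H. g i = M}"
  have "S \<subseteq> V" using \<open>H \<subseteq> V\<close> unfolding S_def by blast
  moreover have "x \<in> S" using x not_on_boundary unfolding S_def by auto
  moreover have "\<forall>i\<in>S. \<forall>j\<in>V. adj w i j \<longrightarrow> j \<in> S"
  proof (intro ballI impI)
    fix i j assume "i \<in> S" "j \<in> V" "adj w i j"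
    then have "i \<in> H" "g i = M" unfolding S_def by auto
    have closure: "neighbours V w i \<subseteq> H \<union> ?B"
      using adj_in_vertex_closure[OF sym \<open>H \<subseteq> V\<close> \<open>i \<in> H\<close>] by blast
    have "g j = M"
    proof (rule weighted_mean_ge_upper_bound_imp_eq[where w = "w i"])
      show "finite (neighbours V w i)" using \<open>finite V\<close> by simp
      show "\<forall>k\<in>neighbours V w i. w i k > 0" by (simp add: adj_def)
      show "\<forall>k\<in>neighbours V w i. g k \<le> M" using closure le_M by blast
      show "(\<Sum>k\<in>neighbours V w i. w i k) * M \<le> (\<Sum>k\<in>neighbours V w i. w i k * g k)"
        using submean \<open>i \<in> H\<close> \<open>g i = M\<close> by metis
      show "j \<in> neighbours V w i" using \<open>j \<in> V\<close> \<open>adj w i j\<close> by simp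
    qed
    moreover have "j \<in> H \<union> ?B" using closure \<open>j \<in> V\<close> \<open>adj w i j\<close> by blast
    ultimately show "j \<in> S" using not_on_boundary unfolding S_def by blast
  qed
  ultimately have "S = V" by (rule adj_closed_subset_eq[OF connected])
  then show False using \<open>H \<subseteq> V\<close> \<open>H \<noteq> V\<close> unfolding S_def by blast
qed

lemma Max_image_subset_eq_if_attained:
  assumes "finite A" "B \<subseteq> A" "b \<in> B" "g b = Max (g ` A)"
  shows "Max (g ` B) = Max (g ` A)"
proof (rule antisym)
  show "Max (g ` B) \<le> Max (g ` A)"
    using assms by (intro Max_mono) (auto intro: finite_subset)
  show "Max (g ` A) \<le> Max (g ` B)"
    using assms by (metis Max_ge finite_imageI finite_subset image_eqI)
qed

theorem proposition4p1:
  fixes V :: "'v set" and w :: "'v \<Rightarrow> 'v \<Rightarrow> real" and \<sigma> :: "'v \<Rightarrow> 'v \<Rightarrow> real^'d^'d"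
    and H :: "'v set" and f :: "'v \<Rightarrow> real^'d^'d" and N :: "real^'d^'d \<Rightarrow> real"
  assumes "connection_graph V w \<sigma>"
    and "H \<subseteq> V" and "H \<noteq> {}" and "H \<noteq> V"
    and "\<forall>i\<in>H. conn_laplacian V w \<sigma> f i = 0"
    and "orth_inv_matrix_norm N"
  shows "Max ((\<lambda>i. N (f i)) ` (H \<union> vertex_boundary V w H))
       = Max ((\<lambda>i. N (f i)) ` vertex_boundary V w H)"
proof -
  have graph: "finite V" "\<forall>i\<in>V. \<forall>j\<in>V. w i j = w j i"
    "\<forall>i\<in>V. \<forall>j\<in>V. (i, j) \<in> {(a, b). a \<in> V \<and> b \<in> V \<and> adj w a b}\<^sup>*"
    using assms(1) unfolding connection_graph_def by auto
  have "\<forall>i\<in>H. (\<Sum>j\<in>neighbours V w i. w i j) * N (f i) \<le> (\<Sum>j\<in>neighbours V w i. w i j * N (f j))"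
    using harmonic_norm_submean[OF assms(1) _ _ assms(6)] assms(2,5) by blast
  then obtain b where "b \<in> vertex_boundary V w H"
    "N (f b) = Max ((\<lambda>i. N (f i)) ` (H \<union> vertex_boundary V w H))"
    using submean_attains_Max_on_vertex_boundary[OF graph assms(2-4), of "\<lambda>i. N (f i)"] by blast
  moreover have "finite (H \<union> vertex_boundary V w H)"
    using graph(1) assms(2) unfolding vertex_boundary_def by (simp add: finite_subset)
  ultimately show ?thesis
    using Max_image_subset_eq_if_attained[of "H \<union> vertex_boundary V w H"] by (metis sup_ge2)
qed

end
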